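(* Let $a, b, n$ be positive integers with $b>1$, $n>1$ and $\gcd(r_b(n),a)=1$. Then the genus of $S_a(b,n)$ is \[\operatorname{g}(S_a(b,n)) = \frac{(n-1)\, b^n + (r_b(n) - 1)\, a}{2} = \frac{(n-1)\,b^n + a\sum_{j=1}^{n-1} b^j}{2}.\]
   Context: For $\ell \ge 1$, $r_b(\ell) = \sum_{j=0}^{\ell-1} b^j$, and $r_b(0)=0$. For $i \ge 1$, $a_i := r_b(n) + a\, r_b(i-1)$; $S_a(b,n)$ is the numerical semigroup generated by $\{a_i : i\ge 1\}$. The genus $\operatorname{g}(S)$ of a numerical semigroup $S$ is the cardinality of $\mathbb{N}\setminus S$. *)

theory Defs
  imports Main
begin

definition rb :: "nat \<Rightarrow> nat \<Rightarrow> nat" where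
  "rb b l = (\<Sum>j<l. b ^ j)"

inductive_set gen_monoid :: "nat set \<Rightarrow> nat set" for A :: "nat set" where
  zero: "0 \<in> gen_monoid A"
| gen: "x \<in> A \<Longrightarrow> x \<in> gen_monoid A"
| add: "x \<in> gen_monoid A \<Longrightarrow> y \<in> gen_monoid A \<Longrightarrow> x + y \<in> gen_monoid A"

definition gen_a :: "nat \<Rightarrow> nat \<Rightarrow> nat \<Rightarrow> nat \<Rightarrow> nat" where
  "gen_a a b n i = rb b n + a * rb b (i - 1)"

definition S_a :: "nat \<Rightarrow> nat \<Rightarrow> nat \<Rightarrow> nat set" where
  "S_a a b n = gen_monoid {gen_a a b n i | i. i \<ge> 1}"

definition genus :: "nat set \<Rightarrow> nat" where
  "genus S = card (UNIV - S)"

end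

(*
  Write m = r_b(n). The elements of S_a(b,n) are the numbers p m + a y with y a sum of p
  repunits r_0, r_1, ...; such an element lies in the residue class of a u modulo m, where
  u = y mod m. Writing u < m greedily as a sum of the repunits r_1, ..., r_(n-1) is optimal: a
  carry argument shows that g(y mod m) <= p + y div m, where g(u) is the number of parts of the
  greedy decomposition. So the Apery set of S_a(b,n) with respect to m consists of the numbers
  a u + g(u) m for u < m (a distinct class for each u since gcd(a,m) = 1), and Selmer's formula
  gives genus = sum_(u<m) (g(u) + floor(a u / m)). Splitting u < r_b(n) by its leading greedy
  digit and inducting on n gives 2 sum_(u<m) g(u) = (n-1) b^n + m - 1, and pairing u with m - u gives
  2 sum_(u<m) floor(a u / m) = (a-1)(m-1).
*)
theory Submission
  imports Defs "HOL-Number_Theory.Cong"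
begin

lemma rb_0 [simp]: "rb b 0 = 0"
  by (simp add: rb_def)

lemma rb_Suc: "rb b (Suc k) = rb b k + b ^ k"
  by (simp add: rb_def)

lemma rb_Suc_eq_mult_add_1: "rb b (Suc k) = b * rb b k + 1"
  unfolding rb_def by (subst sum.lessThan_Suc_shift) (simp add: sum_distrib_left)

lemma rb_Suc_pos: "0 < rb b (Suc k)"
  by (simp add: rb_Suc_eq_mult_add_1)

lemma rb_mono: "j \<le> k \<Longrightarrow> rb b j \<le> rb b k"
  unfolding rb_def by (rule sum_mono2) auto

lemma rb_Suc_eq_sum: "rb b (Suc k) = 1 + (\<Sum>j=1..k. b ^ j)"
  by (induction k) (simp_all add: rb_Suc)

lemma power_eq_rb: "1 \<le> b \<Longrightarrow> b ^ k = (b - 1) * rb b k + 1"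
  by (induction k) (auto simp: rb_Suc algebra_simps le_iff_add)

lemma rb_add: "rb b (k + j) = rb b k + b ^ k * rb b j"
  by (induction j) (auto simp: rb_Suc algebra_simps power_add)

lemma rb_add_eq_add_mult:
  assumes "1 \<le> b"
  shows "\<exists>c. rb b (k + j) = rb b j + c * rb b k"
proof
  show "rb b (k + j) = rb b j + (1 + (b - 1) * rb b j) * rb b k"
    unfolding rb_add power_eq_rb[OF assms] by (simp add: algebra_simps)
qed

fun greedy_repunits :: "nat \<Rightarrow> nat \<Rightarrow> nat \<Rightarrow> nat" where
  "greedy_repunits b 0 u = 0"
| "greedy_repunits b (Suc k) u =
     u div rb b (Suc k) + greedy_repunits b k (u mod rb b (Suc k))"

lemma greedy_repunits_0 [simp]: "greedy_repunits b k 0 = 0"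
  by (induction k) auto

lemma greedy_repunits_Suc_mult_add:
  "v < rb b (Suc k) \<Longrightarrow> greedy_repunits b (Suc k) (q * rb b (Suc k) + v) = q + greedy_repunits b k v"
  using rb_Suc_pos[of b k] by simp

lemma greedy_repunits_Suc_less:
  "v < rb b (Suc k) \<Longrightarrow> greedy_repunits b (Suc k) v = greedy_repunits b k v"
  using greedy_repunits_Suc_mult_add[of v b k 0] by simp

lemma greedy_repunits_below:
  "x < rb b (Suc j) \<Longrightarrow> j \<le> k \<Longrightarrow> greedy_repunits b k x = greedy_repunits b j x"
proof (induction k)
  case (Suc k)
  show ?case
  proof (cases "j = Suc k")
    case False
    with Suc.prems have "j \<le> k" and "x < rb b (Suc k)"
      using rb_mono[of "Suc j" "Suc k" b] by auto
    with Suc show ?thesis by (simp add: greedy_repunits_Suc_less)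
  qed simp
qed simp

lemma greedy_repunits_rb_minus_1:
  assumes "1 \<le> j" and "j \<le> Suc k"
  shows "greedy_repunits b k (rb b j - 1) \<le> b"
proof -
  obtain i where j: "j = Suc i" using assms(1) by (cases j) auto
  have "rb b j - 1 < rb b (Suc i)" using rb_Suc_pos[of b i] j by simp
  then have "greedy_repunits b k (rb b j - 1) = greedy_repunits b i (rb b j - 1)"
    using assms j by (intro greedy_repunits_below) auto
  moreover have "greedy_repunits b i (rb b j - 1) \<le> b"
  proof (cases i)
    case (Suc h)
    have "rb b j - 1 = b * rb b (Suc h) + 0" using j Suc by (simp add: rb_Suc_eq_mult_add_1)
    then show ?thesis
      using Suc greedy_repunits_Suc_mult_add[of 0 b h b] rb_Suc_pos[of b h] by (simp add: mult.commute)
  qed simp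
  ultimately show ?thesis by simp
qed

lemma greedy_repunits_diff_1:
  "1 \<le> v \<Longrightarrow> v < rb b (Suc k) \<Longrightarrow>
    greedy_repunits b k (v - 1) + 1 \<le> greedy_repunits b k v + b"
proof (induction k arbitrary: v)
  case (Suc k)
  define P where "P = rb b (Suc k)"
  have "P > 0" unfolding P_def by (rule rb_Suc_pos)
  define q w where "q = v div P" and "w = v mod P"
  have v: "v = q * P + w" and "w < P" unfolding q_def w_def using \<open>P > 0\<close> by simp_all
  then have gv: "greedy_repunits b (Suc k) v = q + greedy_repunits b k w"
    unfolding P_def by (simp only: greedy_repunits_Suc_mult_add)
  show ?case
  proof (cases "w = 0")
    case False
    then have "v - 1 = q * P + (w - 1)" using v by simp
    then have "greedy_repunits b (Suc k) (v - 1) = q + greedy_repunits b k (w - 1)"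
      using \<open>w < P\<close> unfolding P_def by (simp only: greedy_repunits_Suc_mult_add)
    with gv Suc.IH[of w] False \<open>w < P\<close> show ?thesis unfolding P_def by simp
  next
    case True
    then obtain q' where q: "q = Suc q'" using v Suc.prems(1) by (cases q) auto
    then have "v - 1 = q' * P + (P - 1)" using v True \<open>P > 0\<close> by simp
    then have "greedy_repunits b (Suc k) (v - 1) = q' + greedy_repunits b k (P - 1)"
      using \<open>P > 0\<close> unfolding P_def by (simp only: greedy_repunits_Suc_mult_add)
    moreover have "greedy_repunits b k (P - 1) \<le> b"
      unfolding P_def by (rule greedy_repunits_rb_minus_1) auto
    ultimately show ?thesis using gv True q by simp
  qed
qed (simp add: rb_def)

lemma greedy_repunits_add_rb_overflow:
  fixes b k u i :: nat
  defines "P \<equiv> rb b (Suc k)" and "R \<equiv> rb b (Suc (Suc k))"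
  assumes "u < R" and "i \<le> Suc k" and "R \<le> u + rb b i"
    and IH: "greedy_repunits b k ((u mod P + rb b i) mod P) + (u mod P + rb b i) div P
      \<le> greedy_repunits b k (u mod P) + 1"
  shows "greedy_repunits b (Suc k) (u + rb b i - R) \<le> greedy_repunits b (Suc k) u"
proof -
  let ?g = "greedy_repunits b k" and ?g' = "greedy_repunits b (Suc k)"
  have R: "R = b * P + 1" and "P > 0"
    unfolding P_def R_def by (simp_all add: rb_Suc_eq_mult_add_1 rb_Suc_pos)
  have "rb b i \<le> P" unfolding P_def using \<open>i \<le> Suc k\<close> by (rule rb_mono)
  define q v s where "q = u div P" and "v = u mod P" and "s = u mod P + rb b i"
  have u: "u = q * P + v" and "v < P" unfolding q_def v_def using \<open>P > 0\<close> by simp_all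
  have gu: "?g' u = q + ?g v"
    unfolding u P_def using \<open>v < P\<close> P_def by (simp only: greedy_repunits_Suc_mult_add)
  have "q * P < b * P + 1" using u \<open>u < R\<close> R by linarith
  then have "q \<le> b" using \<open>P > 0\<close> by (metis less_Suc_eq_le mult_le_cancel2 Suc_eq_plus1 not_less)
  show ?thesis
  proof (cases "q = b")
    case True
    with u R \<open>u < R\<close> have "v = 0" by simp
    with \<open>R \<le> u + rb b i\<close> u R True have "rb b i \<noteq> 0" and diff: "u + rb b i - R = rb b i - 1"
      by auto
    then have "i \<noteq> 0" by (metis rb_0)
    have "?g' (rb b i - 1) = ?g (rb b i - 1)"
      using \<open>rb b i \<le> P\<close> \<open>P > 0\<close> unfolding P_def by (intro greedy_repunits_Suc_less) simp
    also have "\<dots> \<le> b" using \<open>i \<noteq> 0\<close> \<open>i \<le> Suc k\<close> by (intro greedy_repunits_rb_minus_1) auto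
    finally show ?thesis using diff gu True by simp
  next
    case False
    have "s < 2 * P" using \<open>v < P\<close> \<open>rb b i \<le> P\<close> unfolding s_def v_def by simp
    have "q + 1 = b"
    proof (rule ccontr)
      assume "q + 1 \<noteq> b"
      with False \<open>q \<le> b\<close> have "(q + 2) * P \<le> b * P" by (intro mult_le_mono1) simp
      then show False
        using \<open>R \<le> u + rb b i\<close> \<open>s < 2 * P\<close> u R unfolding s_def v_def by (simp add: algebra_simps)
    qed
    then have "P < s" using \<open>R \<le> u + rb b i\<close> u R unfolding s_def v_def
      by (simp add: algebra_simps flip: \<open>q + 1 = b\<close>)
    define w where "w = s - P"
    have "w < P" "1 \<le> w" and "s mod P = w" "s div P = 1"
      using \<open>P < s\<close> \<open>s < 2 * P\<close> unfolding w_def by (simp_all add: mod_if div_if)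
    have diff: "u + rb b i - R = w - 1"
      using u R \<open>P < s\<close> unfolding w_def s_def v_def by (simp add: algebra_simps flip: \<open>q + 1 = b\<close>)
    have "?g' (w - 1) = ?g (w - 1)"
      using \<open>w < P\<close> unfolding P_def by (intro greedy_repunits_Suc_less) simp
    moreover have "?g (w - 1) + 1 \<le> ?g w + b"
      using \<open>1 \<le> w\<close> \<open>w < P\<close> unfolding P_def by (rule greedy_repunits_diff_1)
    ultimately show ?thesis
      using diff gu IH \<open>s mod P = w\<close> \<open>s div P = 1\<close> \<open>q + 1 = b\<close> unfolding s_def v_def by simp
  qed
qed

lemma greedy_repunits_add_rb:
  assumes "u < rb b (Suc k)" and "i \<le> Suc k"
  shows "greedy_repunits b k ((u + rb b i) mod rb b (Suc k)) + (u + rb b i) div rb b (Suc k)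
    \<le> greedy_repunits b k u + 1"
  using assms
proof (induction k arbitrary: u)
  case 0
  then show ?case by (auto simp: rb_def le_Suc_eq)
next
  case (Suc k)
  define P R where "P = rb b (Suc k)" and "R = rb b (Suc (Suc k))"
  have "P > 0" "P \<le> R" unfolding P_def R_def by (simp_all add: rb_Suc_pos rb_mono)
  show ?case
  proof (cases "i = Suc (Suc k)")
    case True
    then have "rb b i = R" and "u < R" using Suc.prems(1) unfolding R_def by simp_all
    with \<open>P > 0\<close> \<open>P \<le> R\<close> show ?thesis unfolding R_def[symmetric] by (simp add: div_add_self2)
  next
    case False
    with Suc.prems have "i \<le> Suc k" by simp
    then have "rb b i \<le> P" unfolding P_def by (rule rb_mono)
    define s where "s = u mod P + rb b i"
    have IH: "greedy_repunits b k (s mod P) + s div P \<le> greedy_repunits b k (u mod P) + 1"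
      using Suc.IH[OF _ \<open>i \<le> Suc k\<close>, of "u mod P"] \<open>P > 0\<close> unfolding P_def s_def by simp
    show ?thesis
    proof (cases "u + rb b i < R")
      case True
      have "u + rb b i = s + u div P * P" unfolding s_def by simp
      then have "(u + rb b i) div P = u div P + s div P" and "(u + rb b i) mod P = s mod P"
        using \<open>P > 0\<close> by simp_all
      with True IH show ?thesis unfolding P_def R_def by simp
    next
      case False
      have "u + rb b i < 2 * R" using Suc.prems(1) \<open>rb b i \<le> P\<close> \<open>P \<le> R\<close> unfolding R_def by simp
      with False have "(u + rb b i) mod R = u + rb b i - R" and "(u + rb b i) div R = 1"
        by (simp_all add: mod_if div_if)
      moreover have "greedy_repunits b (Suc k) (u + rb b i - R) \<le> greedy_repunits b (Suc k) u"
        using Suc.prems(1) \<open>i \<le> Suc k\<close> False IH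
        unfolding P_def R_def s_def by (intro greedy_repunits_add_rb_overflow) simp_all
      ultimately show ?thesis unfolding R_def by simp
    qed
  qed
qed

lemma greedy_repunits_add_rb_mod:
  assumes "1 \<le> b" and "u < rb b (Suc k)"
  shows "greedy_repunits b k ((u + rb b i) mod rb b (Suc k))
    \<le> greedy_repunits b k u + 1 + (u + rb b i) div rb b (Suc k)"
proof (induction i rule: less_induct)
  case (less i)
  show ?case
  proof (cases "i \<le> Suc k")
    case True
    then show ?thesis using greedy_repunits_add_rb[OF assms(2) True] by linarith
  next
    case False
    define j where "j = i - Suc k"
    have "j < i" and i: "i = Suc k + j" using False unfolding j_def by simp_all
    obtain c where c: "rb b i = rb b j + c * rb b (Suc k)"
      unfolding i using rb_add_eq_add_mult[OF assms(1)] by blast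
    have "rb b (Suc k) \<noteq> 0" using rb_Suc_pos[of b k] by simp
    then show ?thesis using less.IH[OF \<open>j < i\<close>] unfolding c add.assoc[symmetric] by simp
  qed
qed

text \<open>Since the summand \<open>rb b 0 = 0\<close> is allowed, \<open>sum_of_repunits b p y\<close> says that \<open>y\<close> is a
  sum of at most \<open>p\<close> nonzero repunits.\<close>
inductive sum_of_repunits :: "nat \<Rightarrow> nat \<Rightarrow> nat \<Rightarrow> bool" for b where
  zero: "sum_of_repunits b 0 0"
| add_rb: "sum_of_repunits b p y \<Longrightarrow> sum_of_repunits b (Suc p) (y + rb b i)"

lemma sum_of_repunits_add:
  "sum_of_repunits b q y \<Longrightarrow> sum_of_repunits b p x \<Longrightarrow> sum_of_repunits b (p + q) (x + y)"
proof (induction rule: sum_of_repunits.induct)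
  case (add_rb q y i)
  then have "sum_of_repunits b (Suc (p + q)) ((x + y) + rb b i)" by (intro sum_of_repunits.add_rb)
  then show ?case by (simp add: add.assoc)
qed simp

lemma sum_of_repunits_mult: "sum_of_repunits b c (c * rb b j)"
proof (induction c)
  case (Suc c)
  then show ?case using sum_of_repunits.add_rb[OF Suc, of j] by (simp add: add.commute)
qed (simp add: sum_of_repunits.zero)

lemma sum_of_repunits_pad: "sum_of_repunits b p y \<Longrightarrow> sum_of_repunits b (p + e) y"
  using sum_of_repunits_add[OF sum_of_repunits_mult[of b e 0]] by simp

lemma sum_of_repunits_greedy:
  "u < rb b (Suc k) \<Longrightarrow> sum_of_repunits b (greedy_repunits b k u) u"
proof (induction k arbitrary: u)
  case 0
  then show ?case by (simp add: rb_def sum_of_repunits.zero)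
next
  case (Suc k)
  define P where "P = rb b (Suc k)"
  have "u mod P < P" unfolding P_def using rb_Suc_pos by simp
  then have "sum_of_repunits b (greedy_repunits b k (u mod P)) (u mod P)"
    unfolding P_def by (rule Suc.IH)
  from sum_of_repunits_add[OF this sum_of_repunits_mult[of b "u div P" "Suc k"]]
  show ?case unfolding P_def by (simp add: mult.commute)
qed

lemma greedy_repunits_le_sum_of_repunits:
  assumes "sum_of_repunits b p y" and "1 \<le> b"
  shows "greedy_repunits b k (y mod rb b (Suc k)) \<le> p + y div rb b (Suc k)"
  using assms(1)
proof (induction rule: sum_of_repunits.induct)
  case (add_rb p y i)
  define m where "m = rb b (Suc k)"
  have "m > 0" unfolding m_def by (rule rb_Suc_pos)
  define u where "u = y mod m"
  have y: "y + rb b i = (u + rb b i) + y div m * m" unfolding u_def by simp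
  have mod: "(y + rb b i) mod m = (u + rb b i) mod m" unfolding y by (rule mod_mult_self1)
  have div: "(y + rb b i) div m = (u + rb b i) div m + y div m"
    unfolding y using \<open>m > 0\<close> by simp
  have "greedy_repunits b k ((u + rb b i) mod m) \<le> greedy_repunits b k u + 1 + (u + rb b i) div m"
    unfolding m_def using assms(2) \<open>m > 0\<close> by (intro greedy_repunits_add_rb_mod) (simp_all add: u_def m_def)
  then show ?case using add_rb.IH unfolding m_def[symmetric] mod div u_def by simp
qed simp

lemma sum_lessThan_mult_split:
  fixes f :: "nat \<Rightarrow> 'a::comm_monoid_add"
  shows "(\<Sum>u<c * P. f u) = (\<Sum>q<c. \<Sum>v<P. f (q * P + v))"
proof -
  have "(\<Sum>u<c * P. f u) = (\<Sum>q<c. sum f {q * P..<q * P + P})"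
    by (rule sum.nat_group[symmetric])
  also have "\<dots> = (\<Sum>q<c. \<Sum>v<P. f (q * P + v))"
    by (simp add: sum.atLeastLessThan_shift_0 atLeast0LessThan comp_def)
  finally show ?thesis .
qed

lemma greedy_repunits_sum:
  "2 * (\<Sum>u<rb b (Suc k). greedy_repunits b k u) + 1 = k * b ^ Suc k + rb b (Suc k)"
proof (induction k)
  case 0
  then show ?case by (simp add: rb_def)
next
  case (Suc k)
  define P G Q where "P = rb b (Suc k)" and "G = (\<Sum>u<P. greedy_repunits b k u)"
    and "Q = (\<Sum>q<b. q)"
  let ?g' = "greedy_repunits b (Suc k)"
  have "P > 0" unfolding P_def by (rule rb_Suc_pos)
  have R: "rb b (Suc (Suc k)) = b * P + 1" unfolding P_def by (rule rb_Suc_eq_mult_add_1)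
  have "(\<Sum>u<rb b (Suc (Suc k)). ?g' u) = (\<Sum>u<b * P. ?g' u) + ?g' (b * P)"
    unfolding R by simp
  also have "(\<Sum>u<b * P. ?g' u) = (\<Sum>q<b. \<Sum>v<P. q + greedy_repunits b k v)"
    unfolding sum_lessThan_mult_split P_def by (intro sum.cong refl) (simp add: greedy_repunits_Suc_mult_add)
  also have "\<dots> = P * Q + b * G"
    unfolding Q_def G_def by (simp add: sum.distrib sum_distrib_left mult.commute)
  also have "?g' (b * P) = b"
    using greedy_repunits_Suc_mult_add[of 0 b k b] \<open>P > 0\<close> unfolding P_def by simp
  finally have sum: "(\<Sum>u<rb b (Suc (Suc k)). ?g' u) = P * Q + b * G + b" .
  have "2 * Q + b = b * b" unfolding Q_def by (induction b) simp_all
  then have Q: "P * (2 * Q + b) = P * (b * b)" by simp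
  have "2 * G + 1 = k * b ^ Suc k + P" using Suc.IH unfolding G_def P_def .
  then have G: "b * (2 * G + 1) = b * (k * b ^ Suc k + P)" by simp
  have "P + b ^ Suc k = b * P + 1" using R unfolding P_def by (simp add: rb_Suc)
  then have "b * (P + b ^ Suc k) = b * (b * P + 1)" by simp
  with Q G show ?case unfolding sum unfolding R by (simp add: algebra_simps)
qed

lemma mem_S_a_iff: "t \<in> S_a a b n \<longleftrightarrow> (\<exists>p y. sum_of_repunits b p y \<and> t = p * rb b n + a * y)"
proof
  assume "t \<in> S_a a b n"
  then show "\<exists>p y. sum_of_repunits b p y \<and> t = p * rb b n + a * y"
    unfolding S_a_def
  proof (induction rule: gen_monoid.induct)
    case zero
    show ?case using sum_of_repunits.zero by auto
  next
    case (gen x)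
    then obtain i where "x = rb b n + a * rb b (i - 1)" by (auto simp: gen_a_def)
    moreover have "sum_of_repunits b 1 (rb b (i - 1))"
      using sum_of_repunits.add_rb[OF sum_of_repunits.zero] by fastforce
    ultimately show ?case by fastforce
  next
    case (add x y)
    then obtain p1 y1 p2 y2 where "sum_of_repunits b p1 y1" "x = p1 * rb b n + a * y1"
      and "sum_of_repunits b p2 y2" "y = p2 * rb b n + a * y2"
      by blast
    then show ?case
      using sum_of_repunits_add[of b p2 y2 p1 y1]
      by (intro exI[of _ "p1 + p2"] exI[of _ "y1 + y2"]) (simp add: algebra_simps)
  qed
next
  assume "\<exists>p y. sum_of_repunits b p y \<and> t = p * rb b n + a * y"
  then obtain p y where "sum_of_repunits b p y" and t: "t = p * rb b n + a * y" by blast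
  from this(1) show "t \<in> S_a a b n" unfolding t
  proof (induction rule: sum_of_repunits.induct)
    case zero
    show ?case unfolding S_a_def by (simp add: gen_monoid.zero)
  next
    case (add_rb p y i)
    have "gen_a a b n (Suc i) \<in> S_a a b n" unfolding S_a_def by (rule gen_monoid.gen) auto
    from gen_monoid.add[OF add_rb.IH[unfolded S_a_def] this[unfolded S_a_def]]
    show ?case unfolding S_a_def gen_a_def by (simp add: algebra_simps)
  qed
qed

text \<open>\<open>W u\<close> is the least element of \<open>S\<close> in its residue class modulo \<open>m\<close>; the gaps in that
  class are \<open>W u - m, W u - 2 m, ...\<close>, i.e. \<open>W u div m\<close> of them.\<close>
lemma Selmer_formula:
  fixes S :: "nat set" and W :: "nat \<Rightarrow> nat"
  assumes "m > 0"
    and inj: "inj_on (\<lambda>u. W u mod m) {..<m}"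
    and mem: "\<And>t. t \<in> S \<longleftrightarrow> (\<exists>u<m. W u mod m = t mod m \<and> W u \<le> t)"
  shows "finite (UNIV - S) \<and> card (UNIV - S) = (\<Sum>u<m. W u div m)"
proof -
  define D where "D = Sigma {..<m} (\<lambda>u. {..<W u div m})"
  define F where "F = (\<lambda>(u, q). q * m + W u mod m)"
  have residues: "(\<lambda>u. W u mod m) ` {..<m} = {..<m}"
    using \<open>m > 0\<close> by (intro endo_inj_surj inj) auto
  have below: "q < W u div m \<longleftrightarrow> q * m + W u mod m < W u" for q u
  proof -
    have "q * m + W u mod m < W u \<longleftrightarrow> q * m < W u div m * m"
      using div_mult_mod_eq[of "W u" m] by linarith
    then show ?thesis using \<open>m > 0\<close> by simp
  qed
  have gaps: "UNIV - S = F ` D"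
  proof (intro equalityI subsetI)
    fix t
    assume "t \<in> UNIV - S"
    have "t mod m \<in> (\<lambda>u. W u mod m) ` {..<m}" using residues \<open>m > 0\<close> by simp
    then obtain u where "u < m" and u: "W u mod m = t mod m" by auto
    with \<open>t \<in> UNIV - S\<close> mem have "t < W u" by auto
    moreover have t: "t = t div m * m + W u mod m" using u by simp
    ultimately have "(u, t div m) \<in> D" using below[of "t div m" u] \<open>u < m\<close> unfolding D_def by simp
    then show "t \<in> F ` D" unfolding F_def using t by force
  next
    fix t
    assume "t \<in> F ` D"
    then obtain u q where "u < m" and "q < W u div m" and t: "t = q * m + W u mod m"
      unfolding D_def F_def by auto
    then have "t < W u" and "t mod m = W u mod m" using below by simp_all
    have "t \<notin> S"
    proof
      assume "t \<in> S"
      then obtain u' where "u' < m" "W u' mod m = t mod m" "W u' \<le> t" using mem by blast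
      with \<open>t mod m = W u mod m\<close> \<open>u < m\<close> have "u' = u" using inj by (auto dest: inj_onD)
      with \<open>W u' \<le> t\<close> \<open>t < W u\<close> show False by simp
    qed
    then show "t \<in> UNIV - S" by simp
  qed
  have "inj_on F D"
  proof (rule inj_onI)
    fix x y
    assume "x \<in> D" "y \<in> D" and "F x = F y"
    then obtain u q u' q' where x: "x = (u, q)" "u < m" and y: "y = (u', q')" "u' < m"
      and eq: "q * m + W u mod m = q' * m + W u' mod m"
      unfolding D_def F_def by auto
    then have "W u mod m = W u' mod m" by (metis mod_mult_self3 mod_mod_trivial)
    with x y have "u = u'" using inj by (auto dest: inj_onD)
    with eq \<open>m > 0\<close> have "q = q'" by simp
    with x y \<open>u = u'\<close> show "x = y" by simp
  qed
  then have "card (F ` D) = (\<Sum>u<m. W u div m)" unfolding D_def by (simp add: card_image)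
  moreover have "finite (F ` D)" unfolding D_def by simp
  ultimately show ?thesis unfolding gaps by simp
qed

text \<open>For \<open>u < r_b(k+1)\<close>, the least element of \<open>S_a(b, k+1)\<close> congruent to \<open>a u\<close>
  modulo \<open>r_b(k+1)\<close>.\<close>
definition apery_S_a :: "nat \<Rightarrow> nat \<Rightarrow> nat \<Rightarrow> nat \<Rightarrow> nat" where
  "apery_S_a a b k u = a * u + greedy_repunits b k u * rb b (Suc k)"

lemma mem_S_a_iff_apery:
  fixes a b k :: nat
  assumes "a > 0" and "1 \<le> b"
  defines "m \<equiv> rb b (Suc k)"
  shows "t \<in> S_a a b (Suc k) \<longleftrightarrow>
    (\<exists>u<m. apery_S_a a b k u mod m = t mod m \<and> apery_S_a a b k u \<le> t)"
proof
  assume "t \<in> S_a a b (Suc k)"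
  then obtain p y where "sum_of_repunits b p y" and t: "t = p * m + a * y"
    unfolding mem_S_a_iff m_def by blast
  define u where "u = y mod m"
  have "m > 0" unfolding m_def by (rule rb_Suc_pos)
  have "greedy_repunits b k u \<le> p + y div m"
    unfolding u_def m_def using \<open>sum_of_repunits b p y\<close> assms(2)
    by (rule greedy_repunits_le_sum_of_repunits)
  then have "apery_S_a a b k u \<le> a * u + (p + y div m) * m"
    unfolding apery_S_a_def m_def by simp
  also have "\<dots> \<le> a * u + p * m + a * (y div m * m)"
    using \<open>a > 0\<close> by (simp add: algebra_simps)
  also have "\<dots> = t"
  proof -
    have "a * y = a * (u + y div m * m)" by (simp add: u_def)
    then show ?thesis unfolding t by (simp add: algebra_simps)
  qed
  finally have "apery_S_a a b k u \<le> t" .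
  moreover have "apery_S_a a b k u mod m = t mod m"
    unfolding apery_S_a_def t u_def m_def[symmetric] by (simp add: mod_mult_right_eq)
  moreover have "u < m" unfolding u_def using \<open>m > 0\<close> by simp
  ultimately show "\<exists>u<m. apery_S_a a b k u mod m = t mod m \<and> apery_S_a a b k u \<le> t" by blast
next
  assume "\<exists>u<m. apery_S_a a b k u mod m = t mod m \<and> apery_S_a a b k u \<le> t"
  then obtain u where "u < m" and "[t = apery_S_a a b k u] (mod m)" and "apery_S_a a b k u \<le> t"
    by (auto simp: cong_def)
  then obtain e where "t = e * m + apery_S_a a b k u" using cong_le_nat by blast
  then have t: "t = (greedy_repunits b k u + e) * rb b (Suc k) + a * u"
    unfolding apery_S_a_def m_def by (simp add: algebra_simps)
  have "sum_of_repunits b (greedy_repunits b k u + e) u"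
    using \<open>u < m\<close> unfolding m_def by (intro sum_of_repunits_pad sum_of_repunits_greedy)
  then show "t \<in> S_a a b (Suc k)" unfolding mem_S_a_iff t by blast
qed

lemma inj_on_apery_S_a_mod:
  fixes a b k :: nat
  assumes "coprime a (rb b (Suc k))"
  defines "m \<equiv> rb b (Suc k)"
  shows "inj_on (\<lambda>u. apery_S_a a b k u mod m) {..<m}"
proof (rule inj_onI)
  fix u u'
  assume "u \<in> {..<m}" "u' \<in> {..<m}" and "apery_S_a a b k u mod m = apery_S_a a b k u' mod m"
  then have "[a * u = a * u'] (mod m)" and "u < m" "u' < m"
    unfolding apery_S_a_def m_def cong_def by simp_all
  then show "u = u'"
    using assms(1) unfolding m_def by (simp add: cong_mult_lcancel_nat cong_less_modulus_unique_nat)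
qed

lemma div_add_div_complement:
  fixes a m u :: nat
  assumes "coprime a m" and "0 < u" and "u < m"
  shows "a * u div m + a * (m - u) div m + 1 = a"
proof -
  define x y where "x = a * u mod m" and "y = a * (m - u) mod m"
  have "\<not> m dvd a * u"
    using assms by (metis coprime_commute coprime_dvd_mult_right_iff dvd_imp_le not_le)
  then have "x \<noteq> 0" unfolding x_def by (simp add: dvd_eq_mod_eq_0)
  have sum: "a * u + a * (m - u) = a * m" using assms(3) by (simp flip: distrib_left)
  then have "(x + y) mod m = 0" unfolding x_def y_def by (simp add: mod_add_eq)
  moreover have "x < m" "y < m" unfolding x_def y_def using assms(3) by simp_all
  ultimately have "x + y = m"
    using \<open>x \<noteq> 0\<close> by (cases "x + y < m") (simp_all add: le_mod_geq)
  moreover have "a * u = a * u div m * m + x" "a * (m - u) = a * (m - u) div m * m + y"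
    unfolding x_def y_def by simp_all
  ultimately have "(a * u div m + a * (m - u) div m + 1) * m = a * m"
    using sum by (simp add: algebra_simps)
  then show ?thesis using assms(3) unfolding mult_cancel2 by simp
qed

lemma sum_mult_div_coprime:
  fixes a m :: nat
  assumes "coprime a m" and "0 < m"
  shows "2 * (\<Sum>u<m. a * u div m) + a + m = a * m + 1"
proof -
  define f where "f u = a * u div m" for u
  have drop_0: "(\<Sum>u<m. f u) = (\<Sum>u\<in>{1..<m}. f u)"
    using \<open>0 < m\<close> by (simp add: lessThan_atLeast0 sum.atLeast_Suc_lessThan f_def)
  have rev: "(\<Sum>u\<in>{1..<m}. f (m - u)) = (\<Sum>u\<in>{1..<m}. f u)"
    using sum.atLeastLessThan_rev[of f 1 m] by simp
  have "2 * (\<Sum>u\<in>{1..<m}. f u) + (m - 1) = (\<Sum>u\<in>{1..<m}. f u + f (m - u) + 1)"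
    unfolding sum.distrib rev by simp
  also have "\<dots> = (\<Sum>u\<in>{1..<m}. a)"
    using div_add_div_complement[OF assms(1)] by (intro sum.cong) (auto simp: f_def)
  finally have "2 * (\<Sum>u<m. f u) + (m - 1) = (m - 1) * a" unfolding drop_0 by simp
  moreover have "(m - 1) * a + a = a * m" using \<open>0 < m\<close> by (cases m) simp_all
  ultimately show ?thesis using \<open>0 < m\<close> unfolding f_def by linarith
qed

lemma genus_S_a:
  fixes a b k :: nat
  assumes "a > 0" and "1 \<le> b" and "coprime a (rb b (Suc k))"
  defines "m \<equiv> rb b (Suc k)"
  shows "finite (UNIV - S_a a b (Suc k))
    \<and> genus (S_a a b (Suc k)) = (\<Sum>u<m. greedy_repunits b k u) + (\<Sum>u<m. a * u div m)"
proof -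
  have "m > 0" unfolding m_def by (rule rb_Suc_pos)
  have "inj_on (\<lambda>u. apery_S_a a b k u mod m) {..<m}"
    using assms(3) unfolding m_def by (rule inj_on_apery_S_a_mod)
  moreover have "t \<in> S_a a b (Suc k)
      \<longleftrightarrow> (\<exists>u<m. apery_S_a a b k u mod m = t mod m \<and> apery_S_a a b k u \<le> t)" for t
    unfolding m_def using assms(1,2) by (rule mem_S_a_iff_apery)
  ultimately have "finite (UNIV - S_a a b (Suc k))
      \<and> genus (S_a a b (Suc k)) = (\<Sum>u<m. apery_S_a a b k u div m)"
    unfolding genus_def using \<open>m > 0\<close> by (intro Selmer_formula)
  moreover have "(\<Sum>u<m. apery_S_a a b k u div m)
      = (\<Sum>u<m. greedy_repunits b k u) + (\<Sum>u<m. a * u div m)"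
    using \<open>m > 0\<close> unfolding apery_S_a_def m_def by (simp add: sum.distrib)
  ultimately show ?thesis by simp
qed

theorem corollary26:
  fixes a b n :: nat
  assumes "a > 0" and "b > 1" and "n > 1" and "coprime (rb b n) a"
  shows "finite (UNIV - S_a a b n)
    \<and> 2 * genus (S_a a b n) = (n - 1) * b ^ n + (rb b n - 1) * a
    \<and> (n - 1) * b ^ n + (rb b n - 1) * a = (n - 1) * b ^ n + a * (\<Sum>j=1..n-1. b ^ j)"
proof -
  define k m where "k = n - 1" and "m = rb b n"
  have n: "n = Suc k" using \<open>n > 1\<close> unfolding k_def by simp
  have "m > 0" unfolding m_def n by (rule rb_Suc_pos)
  have cop: "coprime a m" using assms(4) unfolding m_def by (simp add: coprime_commute)
  have genus: "finite (UNIV - S_a a b n)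
      \<and> genus (S_a a b n) = (\<Sum>u<m. greedy_repunits b k u) + (\<Sum>u<m. a * u div m)"
    using assms(1,2) cop unfolding n m_def by (intro genus_S_a) simp_all
  have "2 * (\<Sum>u<m. greedy_repunits b k u) + 1 = k * b ^ n + m"
    unfolding m_def n by (rule greedy_repunits_sum)
  moreover have "2 * (\<Sum>u<m. a * u div m) + a + m = a * m + 1"
    using cop \<open>m > 0\<close> by (rule sum_mult_div_coprime)
  moreover have "a \<le> a * m" using \<open>m > 0\<close> by simp
  ultimately have "2 * genus (S_a a b n) = (n - 1) * b ^ n + (rb b n - 1) * a"
    using genus unfolding k_def m_def by (simp add: diff_mult_distrib algebra_simps)
  moreover have "(rb b n - 1) * a = a * (\<Sum>j=1..n-1. b ^ j)" unfolding n rb_Suc_eq_sum by simp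
  ultimately show ?thesis using genus by simp
qed

end
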